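(* Let $R$ be a commutative ring with $1\neq 0$, $S\subseteq R$ a multiplicatively closed subset, $M$ an $R$-module and $N\subseteq K$ submodules of $M$. If $N$ is a weak $S$-copure submodule of $M$, then $K/N$ is a weak $S$-copure submodule of the $R$-module $M/N$.
   Context: All rings are commutative with $1\neq 0$ and all modules are unital. A multiplicatively closed subset (m.c.s.) $S$ of $R$ is a subset with $0\notin S$, $1\in S$, and $ss'\in S$ for all $s,s'\in S$. For an ideal $I$ and submodule $L$, $(L:_M I)=\{m\in M: Im\subseteq L\}$, $(0:_M I)=\{m\in M: Im=0\}$, and $(L:_R M)=\{r\in R: rM\subseteq L\}$. A prime submodule of $M$ is a proper submodule $P$ such that $rm\in P$ ($r\in R$, $m\in M$) implies $m\in P$ or $r\in(P:_R M)$. A submodule $L$ of $M$ is $S$-copure if there exists $s\in S$ such that $s(L:_M I)\subseteq L+(0:_M I)$ for every ideal $I$ of $R$. A submodule $N$ of $M$ is weak $S$-copure if every prime submodule of $M$ containing $N$ is $S$-copure. *)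

theory Defs
  imports "HOL-Algebra.Algebra"
begin

definition mcs :: "('a, 'c) ring_scheme \<Rightarrow> 'a set \<Rightarrow> bool" where
  "mcs R S \<longleftrightarrow> S \<subseteq> carrier R \<and> \<zero>\<^bsub>R\<^esub> \<notin> S \<and> \<one>\<^bsub>R\<^esub> \<in> S \<and>
     (\<forall>s\<in>S. \<forall>s'\<in>S. s \<otimes>\<^bsub>R\<^esub> s' \<in> S)"

definition mod_colon :: "('a, 'b, 'm) module_scheme \<Rightarrow> 'b set \<Rightarrow> 'a set \<Rightarrow> 'b set" where
  "mod_colon M L I = {m \<in> carrier M. \<forall>a\<in>I. a \<odot>\<^bsub>M\<^esub> m \<in> L}"

definition mod_ann :: "('a, 'b, 'm) module_scheme \<Rightarrow> 'a set \<Rightarrow> 'b set" where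
  "mod_ann M I = {m \<in> carrier M. \<forall>a\<in>I. a \<odot>\<^bsub>M\<^esub> m = \<zero>\<^bsub>M\<^esub>}"

definition ring_colon :: "('a, 'c) ring_scheme \<Rightarrow> ('a, 'b, 'm) module_scheme \<Rightarrow> 'b set \<Rightarrow> 'a set" where
  "ring_colon R M L = {r \<in> carrier R. \<forall>m\<in>carrier M. r \<odot>\<^bsub>M\<^esub> m \<in> L}"

definition prime_submodule :: "('a, 'c) ring_scheme \<Rightarrow> ('a, 'b, 'm) module_scheme \<Rightarrow> 'b set \<Rightarrow> bool" where
  "prime_submodule R M P \<longleftrightarrow> submodule P R M \<and> P \<noteq> carrier M \<and>
     (\<forall>r\<in>carrier R. \<forall>m\<in>carrier M. r \<odot>\<^bsub>M\<^esub> m \<in> P \<longrightarrow> m \<in> P \<or> r \<in> ring_colon R M P)"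

definition S_copure :: "('a, 'c) ring_scheme \<Rightarrow> ('a, 'b, 'm) module_scheme \<Rightarrow> 'a set \<Rightarrow> 'b set \<Rightarrow> bool" where
  "S_copure R M S L \<longleftrightarrow> submodule L R M \<and>
     (\<exists>s\<in>S. \<forall>I. ideal I R \<longrightarrow>
        (\<lambda>m. s \<odot>\<^bsub>M\<^esub> m) ` mod_colon M L I \<subseteq> L <+>\<^bsub>M\<^esub> mod_ann M I)"

definition weak_S_copure :: "('a, 'c) ring_scheme \<Rightarrow> ('a, 'b, 'm) module_scheme \<Rightarrow> 'a set \<Rightarrow> 'b set \<Rightarrow> bool" where
  "weak_S_copure R M S N \<longleftrightarrow> submodule N R M \<and>
     (\<forall>P. prime_submodule R M P \<and> N \<subseteq> P \<longrightarrow> S_copure R M S P)"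

text \<open>Quotient module M/N: carrier the cosets N + x, coset addition, zero N,
  and r(x + N) = rx + N (written as a union, independent of the representative).
  The ring multiplication/one fields of the record are irrelevant for modules.\<close>
definition quot_module :: "('a, 'b, 'm) module_scheme \<Rightarrow> 'b set \<Rightarrow> ('a, 'b set) module" where
  "quot_module M N =
     \<lparr>carrier = A_RCOSETS M N, monoid.mult = set_add M, one = N,
      ring.zero = N, add = set_add M,
      smult = (\<lambda>r A. \<Union> ((\<lambda>x. a_r_coset M N (smult M r x)) ` A))\<rparr>"

definition quot_sub :: "('a, 'b, 'm) module_scheme \<Rightarrow> 'b set \<Rightarrow> 'b set \<Rightarrow> 'b set set" where
  "quot_sub M K N = a_r_coset M N ` K"

end

theory Submission
  imports Defs
begin

text \<open>Every prime submodule of M/N has the form P/N, where its preimage P is a prime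
  submodule of M containing N, hence S-copure by hypothesis. The S-copure condition
  s(P :_M I) \<subseteq> P + (0 :_M I) then descends to M/N, because the coset map sends
  (0 :_M I) into (0 :_{M/N} I). So every prime submodule of M/N is S-copure, and K enters
  only through K/N being a submodule.\<close>

definition quot_preimage :: "('a, 'b, 'm) module_scheme \<Rightarrow> 'b set \<Rightarrow> 'b set set \<Rightarrow> 'b set" where
  "quot_preimage M N P = {m \<in> carrier M. N +>\<^bsub>M\<^esub> m \<in> P}"

locale module_quotient = module R M for R :: "('a, 'c) ring_scheme" and M :: "('a, 'b) module" (structure) +
  fixes N :: "'b set"
  assumes submodule_N: "submodule N R M"
begin

abbreviation M_mod_N :: "('a, 'b set) module" where
  "M_mod_N \<equiv> quot_module M N"

sublocale N: abelian_subgroup N M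
proof (rule abelian_subgroupI3)
  show "additive_subgroup N M"
    using submodule_N unfolding additive_subgroup_def submodule_def by blast
qed (rule abelian_group_axioms)

lemma carrier_M_mod_N: "carrier M_mod_N = a_rcosets N"
  by (simp add: quot_module_def)

lemma zero_M_mod_N: "\<zero>\<^bsub>M_mod_N\<^esub> = N"
  by (simp add: quot_module_def)

lemma coset_in_M_mod_N: "x \<in> carrier M \<Longrightarrow> N +> x \<in> carrier M_mod_N"
  by (simp add: carrier_M_mod_N a_rcosetsI N.a_subset)

lemma M_mod_N_cosetE:
  assumes "A \<in> carrier M_mod_N"
  obtains x where "x \<in> carrier M" "A = N +> x"
  using assms unfolding carrier_M_mod_N A_RCOSETS_def' by auto

lemma add_M_mod_N_coset:
  "x \<in> carrier M \<Longrightarrow> y \<in> carrier M \<Longrightarrow> (N +> x) \<oplus>\<^bsub>M_mod_N\<^esub> (N +> y) = N +> (x \<oplus> y)"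
  by (simp add: quot_module_def N.a_rcos_sum)

lemma smult_M_mod_N_coset:
  assumes r: "r \<in> carrier R" and x: "x \<in> carrier M"
  shows "r \<odot>\<^bsub>M_mod_N\<^esub> (N +> x) = N +> (r \<odot> x)"
proof -
  have "N +> (r \<odot> y) = N +> (r \<odot> x)" if y: "y \<in> N +> x" for y
  proof -
    obtain h where h: "h \<in> N" "y = h \<oplus> x"
      using y unfolding a_r_coset_def' by auto
    with r x N.a_subset have "r \<odot> y = r \<odot> h \<oplus> r \<odot> x"
      by (auto simp: smult_r_distr)
    moreover have "r \<odot> h \<in> N"
      using submodule.smult_closed[OF submodule_N r h(1)] .
    ultimately have "r \<odot> y \<in> N +> (r \<odot> x)"
      using r x by (simp add: a_rcosI N.a_subset)
    from N.a_repr_independence'[OF this smult_closed[OF r x]] show ?thesis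
      by (rule sym)
  qed
  then have "(\<Union>y\<in>N +> x. N +> (r \<odot> y)) = (\<Union>y\<in>N +> x. N +> (r \<odot> x))"
    by (intro SUP_cong) simp_all
  also have "\<dots> = N +> (r \<odot> x)"
    using N.a_rcos_self[OF x] by blast
  finally show ?thesis
    by (simp add: quot_module_def)
qed

lemma a_inv_M_mod_N_coset:
  assumes x: "x \<in> carrier M"
  shows "inv\<^bsub>add_monoid M_mod_N\<^esub> (N +> x) = N +> (\<ominus> x)"
proof -
  \<comment> \<open>the additive monoid of M/N has the fields of the factor group M A_Mod N\<close>
  have "inv\<^bsub>add_monoid M_mod_N\<^esub> (N +> x) = inv\<^bsub>M A_Mod N\<^esub> (N +> x)"
    unfolding m_inv_def by (simp add: quot_module_def A_FactGroup_def')
  also have "\<dots> = N +> (\<ominus> x)"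
    using x coset_in_M_mod_N[OF x] N.a_inv_FactGroup[of "N +> x"] N.a_rcos_inv
    by (simp add: carrier_M_mod_N A_FactGroup_def')
  finally show ?thesis .
qed

lemma submodule_quot_sub:
  assumes K: "submodule K R M"
  shows "submodule (quot_sub M K N) R M_mod_N"
proof (intro submodule.intro subgroup.intro submodule_axioms.intro)
  interpret K: submodule K R M by (fact K)
  have K_carrier: "K \<subseteq> carrier M"
    using K.subset by simp
  show "quot_sub M K N \<subseteq> carrier (add_monoid M_mod_N)"
    using K_carrier coset_in_M_mod_N by (auto simp: quot_sub_def)
  show "\<one>\<^bsub>add_monoid M_mod_N\<^esub> \<in> quot_sub M K N"
    using K.one_closed N.a_rcos_const[OF N.zero_closed]
    by (force simp: quot_sub_def zero_M_mod_N)
  fix A B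
  assume A: "A \<in> quot_sub M K N"
  then obtain k where k: "k \<in> K" "A = N +> k"
    by (auto simp: quot_sub_def)
  show "inv\<^bsub>add_monoid M_mod_N\<^esub> A \<in> quot_sub M K N"
    using k K_carrier submoduleE(3)[OF K] by (auto simp: quot_sub_def a_inv_M_mod_N_coset)
  show "a \<odot>\<^bsub>M_mod_N\<^esub> A \<in> quot_sub M K N" if "a \<in> carrier R" for a
    using k K_carrier that by (auto simp: quot_sub_def smult_M_mod_N_coset)
  assume "B \<in> quot_sub M K N"
  then obtain l where l: "l \<in> K" "B = N +> l"
    by (auto simp: quot_sub_def)
  have "A \<otimes>\<^bsub>add_monoid M_mod_N\<^esub> B = N +> (k \<oplus> l)"
    using k l K_carrier by (simp add: add_M_mod_N_coset subsetD)
  then show "A \<otimes>\<^bsub>add_monoid M_mod_N\<^esub> B \<in> quot_sub M K N"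
    using k l submoduleE(5)[OF K] by (simp add: quot_sub_def)
qed

lemma submodule_quot_preimage:
  assumes P: "submodule P R M_mod_N"
  shows "submodule (quot_preimage M N P) R M"
proof (rule submoduleI)
  interpret P: submodule P R M_mod_N by (fact P)
  show "quot_preimage M N P \<subseteq> carrier M"
    by (auto simp: quot_preimage_def)
  show "\<zero> \<in> quot_preimage M N P"
    using P.one_closed N.a_rcos_const[OF N.zero_closed]
    by (simp add: quot_preimage_def zero_M_mod_N)
  fix a b
  assume a: "a \<in> quot_preimage M N P"
  then show "\<ominus> a \<in> quot_preimage M N P"
    using P.m_inv_closed[of "N +> a"] by (simp add: quot_preimage_def a_inv_M_mod_N_coset)
  show "r \<odot> a \<in> quot_preimage M N P" if "r \<in> carrier R" for r
    using a that P.smult_closed[of r "N +> a"] by (simp add: quot_preimage_def smult_M_mod_N_coset)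
  assume "b \<in> quot_preimage M N P"
  then show "a \<oplus> b \<in> quot_preimage M N P"
    using a P.m_closed[of "N +> a" "N +> b"] by (simp add: quot_preimage_def add_M_mod_N_coset)
qed

lemma subset_quot_preimage:
  assumes "submodule P R M_mod_N"
  shows "N \<subseteq> quot_preimage M N P"
proof
  interpret P: submodule P R M_mod_N by (fact assms)
  fix x
  assume x: "x \<in> N"
  then have "N +> x = N"
    by (rule N.a_rcos_const)
  with x P.one_closed show "x \<in> quot_preimage M N P"
    by (simp add: quot_preimage_def zero_M_mod_N)
qed

lemma prime_submodule_quot_preimage:
  assumes P: "prime_submodule R M_mod_N P"
  shows "prime_submodule R M (quot_preimage M N P)"
proof -
  have sub: "submodule P R M_mod_N" and proper: "P \<noteq> carrier M_mod_N"
    and prime: "\<And>r A. \<lbrakk>r \<in> carrier R; A \<in> carrier M_mod_N; r \<odot>\<^bsub>M_mod_N\<^esub> A \<in> P\<rbrakk>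
       \<Longrightarrow> A \<in> P \<or> r \<in> ring_colon R M_mod_N P"
    using P unfolding prime_submodule_def by blast+
  have "quot_preimage M N P \<noteq> carrier M"
  proof
    assume everything: "quot_preimage M N P = carrier M"
    have "carrier M_mod_N \<subseteq> P"
    proof
      fix A
      assume "A \<in> carrier M_mod_N"
      then obtain x where "x \<in> carrier M" "A = N +> x"
        by (rule M_mod_N_cosetE)
      with everything show "A \<in> P"
        by (auto simp: quot_preimage_def)
    qed
    moreover have "P \<subseteq> carrier M_mod_N"
      using submodule.axioms(1)[OF sub] subgroup.subset by fastforce
    ultimately show False
      using proper by blast
  qed
  moreover have "m \<in> quot_preimage M N P \<or> r \<in> ring_colon R M (quot_preimage M N P)"
    if r: "r \<in> carrier R" and m: "m \<in> carrier M" and rm: "r \<odot> m \<in> quot_preimage M N P" for r m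
  proof -
    have "r \<odot>\<^bsub>M_mod_N\<^esub> (N +> m) \<in> P"
      using rm r m by (simp add: quot_preimage_def smult_M_mod_N_coset)
    then have "N +> m \<in> P \<or> r \<in> ring_colon R M_mod_N P"
      using prime r m coset_in_M_mod_N by blast
    then show ?thesis
    proof
      assume "N +> m \<in> P"
      then show ?thesis
        using m by (simp add: quot_preimage_def)
    next
      assume colon: "r \<in> ring_colon R M_mod_N P"
      have "r \<odot> m' \<in> quot_preimage M N P" if m': "m' \<in> carrier M" for m'
      proof -
        have "r \<odot>\<^bsub>M_mod_N\<^esub> (N +> m') \<in> P"
          using colon coset_in_M_mod_N[OF m'] by (simp add: ring_colon_def)
        then show ?thesis
          using r m' by (simp add: quot_preimage_def smult_M_mod_N_coset)
      qed
      then show ?thesis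
        using r by (simp add: ring_colon_def)
    qed
  qed
  ultimately show ?thesis
    using submodule_quot_preimage[OF sub] unfolding prime_submodule_def by blast
qed

lemma S_copure_M_mod_N_if_quot_preimage:
  assumes P: "submodule P R M_mod_N" and S: "S \<subseteq> carrier R"
    and copure: "S_copure R M S (quot_preimage M N P)"
  shows "S_copure R M_mod_N S P"
proof -
  obtain s where s: "s \<in> S" and s_copure: "\<And>I. ideal I R \<Longrightarrow>
      (\<lambda>m. s \<odot> m) ` mod_colon M (quot_preimage M N P) I
        \<subseteq> quot_preimage M N P <+> mod_ann M I"
    using copure unfolding S_copure_def by blast
  have s_carrier: "s \<in> carrier R"
    using s S by blast
  have "s \<odot>\<^bsub>M_mod_N\<^esub> A \<in> P <+>\<^bsub>M_mod_N\<^esub> mod_ann M_mod_N I"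
    if I: "ideal I R" and A: "A \<in> mod_colon M_mod_N P I" for I A
  proof -
    have I_carrier: "I \<subseteq> carrier R"
      using I by (simp add: ideal_def additive_subgroup.a_subset)
    obtain m where m: "m \<in> carrier M" "A = N +> m"
      using A by (auto simp: mod_colon_def elim: M_mod_N_cosetE)
    have "m \<in> mod_colon M (quot_preimage M N P) I"
      using A m I_carrier
      by (auto simp: mod_colon_def quot_preimage_def smult_M_mod_N_coset subsetD)
    then have "s \<odot> m \<in> quot_preimage M N P <+> mod_ann M I"
      using s_copure[OF I] by blast
    then obtain p z where p: "p \<in> quot_preimage M N P" and z: "z \<in> mod_ann M I"
        and decomp: "s \<odot> m = p \<oplus> z"
      unfolding set_add_def set_mult_def by auto
    have p_carrier: "p \<in> carrier M" and z_carrier: "z \<in> carrier M"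
      using p z by (auto simp: quot_preimage_def mod_ann_def)
    \<comment> \<open>annihilating z modulo N is weaker than annihilating z\<close>
    have "N +> z \<in> mod_ann M_mod_N I"
      using z z_carrier I_carrier N.a_rcos_const[OF N.zero_closed] coset_in_M_mod_N
      by (auto simp: mod_ann_def smult_M_mod_N_coset zero_M_mod_N subsetD)
    moreover have "s \<odot>\<^bsub>M_mod_N\<^esub> A = (N +> p) \<oplus>\<^bsub>M_mod_N\<^esub> (N +> z)"
      using m s_carrier decomp p_carrier z_carrier
      by (simp add: smult_M_mod_N_coset add_M_mod_N_coset)
    ultimately show ?thesis
      using p unfolding set_add_def set_mult_def by (auto simp: quot_preimage_def)
  qed
  then show ?thesis
    using P s unfolding S_copure_def by blast
qed

lemma prime_submodule_M_mod_N_S_copure: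
  assumes S: "S \<subseteq> carrier R" and weak: "weak_S_copure R M S N"
    and P: "prime_submodule R M_mod_N P"
  shows "S_copure R M_mod_N S P"
proof -
  have sub: "submodule P R M_mod_N"
    using P by (simp add: prime_submodule_def)
  have "S_copure R M S (quot_preimage M N P)"
    using weak prime_submodule_quot_preimage[OF P] subset_quot_preimage[OF sub]
    by (simp add: weak_S_copure_def)
  then show ?thesis
    by (rule S_copure_M_mod_N_if_quot_preimage[OF sub S])
qed

end

theorem theorem3p5:
  fixes R :: "('a, 'c) ring_scheme" and M :: "('a, 'b) module"
  assumes "cring R" and "module R M" and "mcs R S"
    and "submodule N R M" and "submodule K R M" and "N \<subseteq> K"
    and "weak_S_copure R M S N"
  shows "weak_S_copure R (quot_module M N) S (quot_sub M K N)"
proof -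
  interpret module_quotient R M N
    using assms(2,4) by (simp add: module_quotient_def module_quotient_axioms_def)
  have "S \<subseteq> carrier R"
    using assms(3) by (simp add: mcs_def)
  then show ?thesis
    using submodule_quot_sub[OF assms(5)] prime_submodule_M_mod_N_S_copure[OF _ assms(7)]
    by (simp add: weak_S_copure_def)
qed

end
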